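(* Let $\succ$ be a binary relation on $\mathcal{F}$ satisfying Axioms A1–A7 below. Then for every $f\in\mathcal{F}$, the set $\{x\in X:x\Join f\}$ is non-empty. Axioms: (A1) $\succ$ is asymmetric and transitive, and its restriction to $X$ is non-trivial and negatively transitive. (A2) For all $f,g,h\in\mathcal{F}$, $\{\alpha\in[0,1]:\alpha f+(1-\alpha)g\succ h\}$ and $\{\alpha\in[0,1]:h\succ\alpha f+(1-\alpha)g\}$ are open in $[0,1]$. (A3) For all $f,g\in\mathcal{F}$, $x\in X$, $\alpha\in(0,1)$: $f\succ g$ iff $\alpha f+(1-\alpha)x\succ\alpha g+(1-\alpha)x$. (A4) For all $x\in X$, $\{f:f\succ x\}$ and $\{f:x\succ f\}$ are convex. (A5) If $f(s)\succ g(s)$ for all $s\in S$ then $f\succ g$. (A6) If for all $x\in X$, $f\Join x$ implies $g\Join x$, then $f\Join g$. (A7) If $f\Join x$, $x\succ g$, $g\Join y$, $f\succ y$ (with $x,y\in X$), then $f\succ g$.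
   Context: $S$ is a set of states with algebra $\Sigma$; $X$ is a non-singleton convex subset of a real vector space; $\mathcal{F}$ is the set of simple acts $f:S\to X$ ($\Sigma$-measurable, finitely many values) with pointwise mixtures; elements of $X$ are identified with constant acts. $f\Join g$ means $f\not\succ g$ and $g\not\succ f$. *)

theory Defs
  imports "HOL-Analysis.Analysis"
begin

text \<open>States: the whole type 'a (S = UNIV) with an algebra Sigma on it.
Outcomes X: a convex subset of a real vector space 'b.\<close>

definition simple_acts :: "'a set set \<Rightarrow> 'b set \<Rightarrow> ('a \<Rightarrow> 'b) set" where
  "simple_acts \<Sigma> X = {f. range f \<subseteq> X \<and> finite (range f) \<and> (\<forall>x. f -` {x} \<in> \<Sigma>)}"

definition const_act :: "'b \<Rightarrow> ('a \<Rightarrow> 'b)" where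
  "const_act x = (\<lambda>_. x)"

definition mix :: "real \<Rightarrow> ('a \<Rightarrow> 'b::real_vector) \<Rightarrow> ('a \<Rightarrow> 'b) \<Rightarrow> ('a \<Rightarrow> 'b)" where
  "mix \<alpha> f g = (\<lambda>s. \<alpha> *\<^sub>R f s + (1 - \<alpha>) *\<^sub>R g s)"

definition incomp :: "('c \<Rightarrow> 'c \<Rightarrow> bool) \<Rightarrow> 'c \<Rightarrow> 'c \<Rightarrow> bool" where
  "incomp P f g \<longleftrightarrow> \<not> P f g \<and> \<not> P g f"

end

theory Submission
  imports Defs
begin

(* Only A6 is needed: if f were comparable with every constant act, the hypothesis of A6 would
   hold vacuously for f and any constant act x0, forcing f and x0 to be incomparable. *)

lemma const_act_in_simple_acts:
  assumes "algebra UNIV \<Sigma>" and "x \<in> X"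
  shows "const_act x \<in> simple_acts \<Sigma> X"
proof -
  have "{} \<in> \<Sigma>" and "UNIV \<in> \<Sigma>"
    using assms(1) by (auto simp: algebra_iff_Un)
  then have "(\<lambda>_. x) -` {y} \<in> \<Sigma>" for y
    by (cases "y = x") auto
  then show ?thesis
    using assms(2) by (auto simp: simple_acts_def const_act_def)
qed

lemma incomp_commute: "incomp P f g \<longleftrightarrow> incomp P g f"
  by (auto simp: incomp_def)

lemma ex_incomp_const_act:
  assumes A6: "\<forall>f\<in>F. \<forall>g\<in>F.
                (\<forall>x\<in>X. incomp P f (const_act x) \<longrightarrow> incomp P g (const_act x)) \<longrightarrow> incomp P f g"
    and "f \<in> F" and "x0 \<in> X" and "const_act x0 \<in> F"
  shows "\<exists>x\<in>X. incomp P (const_act x) f"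
proof (rule ccontr)
  assume none: "\<not> (\<exists>x\<in>X. incomp P (const_act x) f)"
  then have "\<forall>x\<in>X. incomp P f (const_act x) \<longrightarrow> incomp P (const_act x0) (const_act x)"
    by (auto simp: incomp_commute)
  then have "incomp P f (const_act x0)"
    using A6 assms(2,4) by blast
  then show False
    using none \<open>x0 \<in> X\<close> by (auto simp: incomp_commute)
qed

theorem lemma5:
  fixes \<Sigma> :: "'a set set" and X :: "'b::real_vector set"
    and P :: "('a \<Rightarrow> 'b) \<Rightarrow> ('a \<Rightarrow> 'b) \<Rightarrow> bool"
  defines "F \<equiv> simple_acts \<Sigma> X"
  assumes alg: "algebra UNIV \<Sigma>"
    and convX: "convex X"
    and nonsingleton: "\<exists>x\<in>X. \<exists>y\<in>X. x \<noteq> y"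
    \<comment> \<open>A1\<close>
    and asym: "\<forall>f\<in>F. \<forall>g\<in>F. P f g \<longrightarrow> \<not> P g f"
    and trans: "\<forall>f\<in>F. \<forall>g\<in>F. \<forall>h\<in>F. P f g \<longrightarrow> P g h \<longrightarrow> P f h"
    and nontriv: "\<exists>x\<in>X. \<exists>y\<in>X. P (const_act x) (const_act y)"
    and negtrans: "\<forall>x\<in>X. \<forall>y\<in>X. \<forall>z\<in>X. P (const_act x) (const_act z) \<longrightarrow>
                      P (const_act x) (const_act y) \<or> P (const_act y) (const_act z)"
    \<comment> \<open>A2\<close>
    and A2a: "\<forall>f\<in>F. \<forall>g\<in>F. \<forall>h\<in>F.
                openin (top_of_set {0..1}) {\<alpha>\<in>{0..1::real}. P (mix \<alpha> f g) h}"
    and A2b: "\<forall>f\<in>F. \<forall>g\<in>F. \<forall>h\<in>F.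
                openin (top_of_set {0..1}) {\<alpha>\<in>{0..1::real}. P h (mix \<alpha> f g)}"
    \<comment> \<open>A3\<close>
    and A3: "\<forall>f\<in>F. \<forall>g\<in>F. \<forall>x\<in>X. \<forall>\<alpha>\<in>{0<..<1::real}.
                P f g \<longleftrightarrow> P (mix \<alpha> f (const_act x)) (mix \<alpha> g (const_act x))"
    \<comment> \<open>A4\<close>
    and A4a: "\<forall>x\<in>X. \<forall>f\<in>F. \<forall>g\<in>F. \<forall>\<alpha>\<in>{0..1::real}.
                P f (const_act x) \<longrightarrow> P g (const_act x) \<longrightarrow> P (mix \<alpha> f g) (const_act x)"
    and A4b: "\<forall>x\<in>X. \<forall>f\<in>F. \<forall>g\<in>F. \<forall>\<alpha>\<in>{0..1::real}.
                P (const_act x) f \<longrightarrow> P (const_act x) g \<longrightarrow> P (const_act x) (mix \<alpha> f g)"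
    \<comment> \<open>A5\<close>
    and A5: "\<forall>f\<in>F. \<forall>g\<in>F. (\<forall>s. P (const_act (f s)) (const_act (g s))) \<longrightarrow> P f g"
    \<comment> \<open>A6\<close>
    and A6: "\<forall>f\<in>F. \<forall>g\<in>F.
                (\<forall>x\<in>X. incomp P f (const_act x) \<longrightarrow> incomp P g (const_act x)) \<longrightarrow> incomp P f g"
    \<comment> \<open>A7\<close>
    and A7: "\<forall>f\<in>F. \<forall>g\<in>F. \<forall>x\<in>X. \<forall>y\<in>X.
                incomp P f (const_act x) \<longrightarrow> P (const_act x) g \<longrightarrow>
                incomp P g (const_act y) \<longrightarrow> P f (const_act y) \<longrightarrow> P f g"
  shows "\<forall>f\<in>F. {x\<in>X. incomp P (const_act x) f} \<noteq> {}"
proof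
  fix f assume "f \<in> F"
  obtain x0 where "x0 \<in> X"
    using nonsingleton by blast
  then have "const_act x0 \<in> F"
    unfolding F_def by (rule const_act_in_simple_acts[OF alg])
  then have "\<exists>x\<in>X. incomp P (const_act x) f"
    using ex_incomp_const_act[OF A6 \<open>f \<in> F\<close> \<open>x0 \<in> X\<close>] by blast
  then show "{x\<in>X. incomp P (const_act x) f} \<noteq> {}"
    by blast
qed

end
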